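(* Let $\Omega\subseteq\mathbb{R}^n$ be open, $u:\Omega\to\mathbb{R}^N$ continuous, $x\in\Omega$, $\xi\in\mathbb{S}^{N-1}$ and $(P,\mathbf{X})\in\mathbb{R}^{N\times n}\times(\mathbb{R}^N\otimes\mathbb{R}^{n\times n}_s)$. The following are equivalent: (i) $(P,\mathbf{X})\in J^{2,\xi}u(x)$; (ii) there exists an increasing $\sigma\in C^2(0,\infty)$ with $\sigma(0^+)=0$ such that, as $z\to0$, writing $Q(z):=u(z+x)-u(x)-Pz-\frac12\mathbf{X}:z\otimes z$, $$\xi^\top Q(z)\le-\frac{|\xi^\perp Q(z)|^2}{\sigma(|z|)|z|^2}+\sigma(|z|)|z|^2.$$
   Context: $\mathbb{R}^N\otimes\mathbb{R}^{n\times n}_s$ is the space of arrays $\mathbf{X}=(\mathbf{X}_{\alpha ij})$ symmetric in $i,j$; $\mathbf{X}:z\otimes z\in\mathbb{R}^N$ has components $\sum_{i,j}\mathbf{X}_{\alpha ij}z_iz_j$. For $a,b\in\mathbb{R}^N$, $a\vee b:=\frac12(a\otimes b+b\otimes a)$; matrix inequalities in the sense of quadratic forms; $\xi^\perp:=I-\xi\otimes\xi$. Second contact jet: $J^{2,\xi}u(x)$ is the set of $(P,\mathbf{X})$ for which there is a continuous $T:\mathbb{R}^n\setminus\{0\}\to\mathbb{R}^{N\times N}_s$ with $|T(y)|\to0$ as $y\to0$ and $\xi\vee[u(z)-u(x)-P(z-x)-\frac12\mathbf{X}:(z-x)\otimes(z-x)]\le|z-x|^2T(z-x)$ for all $z\ne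 x$ near $x$. *)

theory Defs
  imports "HOL-Analysis.Analysis"
begin

text \<open>An element X of R^N (x) R^{n x n}_s is represented as X :: real^'n^'n^'N with
  components X$alpha$i$j; symmetry in i,j is a separate predicate.\<close>

definition sym_tensor :: "real^'n^'n^'N \<Rightarrow> bool" where
  "sym_tensor X \<longleftrightarrow> (\<forall>a i j. X$a$i$j = X$a$j$i)"

definition tensor_quad :: "real^'n^'n^'N \<Rightarrow> real^'n \<Rightarrow> real^'N" where
  "tensor_quad X z = (\<chi> a. \<Sum>i\<in>UNIV. \<Sum>j\<in>UNIV. X$a$i$j * z$i * z$j)"

definition sym_vee :: "real^'N \<Rightarrow> real^'N \<Rightarrow> real^'N^'N" where
  "sym_vee a b = (\<chi> i j. (a$i * b$j + b$i * a$j) / 2)"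

definition qf_le :: "real^'N^'N \<Rightarrow> real^'N^'N \<Rightarrow> bool" where
  "qf_le A B \<longleftrightarrow> (\<forall>v. v \<bullet> (A *v v) \<le> v \<bullet> (B *v v))"

definition perp_mat :: "real^'N \<Rightarrow> real^'N^'N" where
  "perp_mat \<xi> = mat 1 - (\<chi> i j. \<xi>$i * \<xi>$j)"

definition contact_jet2 ::
  "(real^'n \<Rightarrow> real^'N) \<Rightarrow> real^'N \<Rightarrow> real^'n \<Rightarrow> ((real^'n^'N) \<times> (real^'n^'n^'N)) set" where
  "contact_jet2 u \<xi> x = {(P, X). \<exists>T :: real^'n \<Rightarrow> real^'N^'N.
      continuous_on (UNIV - {0}) T \<and>
      (\<forall>y. y \<noteq> 0 \<longrightarrow> transpose (T y) = T y) \<and>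
      (T \<longlongrightarrow> 0) (at 0) \<and>
      (\<forall>\<^sub>F z in at x.
         qf_le (sym_vee \<xi> (u z - u x - P *v (z - x) - (1/2) *\<^sub>R tensor_quad X (z - x)))
               ((norm (z - x))\<^sup>2 *\<^sub>R T (z - x)))}"

end

(*
  For a unit vector \<xi> and K > 0 the scalar contact inequality
  \<xi>.q \<le> -|\<xi>^perp q|^2/K + K is equivalent, up to the factor 4 in K, to the
  quadratic-form bound \<xi> \<or> q \<le> K I: one direction is Cauchy-Schwarz plus AM-GM after
  splitting v along \<xi>, the other tests \<xi> \<or> q on v = \<xi> + (2/K) \<xi>^perp q.
  Hence a contact jet with error matrices T(z) \<rightarrow> 0 gives (ii) as soon as
  \<sigma>(|z|) \<ge> 4 |T(z)|, and conversely (ii) gives a contact jet with T(z) = \<sigma>(|z|) I.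
  Such a \<sigma> is obtained from the monotone envelope g(r) = sup {min 1 |T(z)| : 0 < |z| \<le> r} + r
  by three successive unit moving averages in the variable log r: each average preserves
  monotonicity and gains one derivative, and the result lies between g(r) and g(e^3 r).
*)

theory Submission
  imports Defs
begin

section \<open>The contact inequality versus the quadratic-form bound\<close>

lemma mult_le_weighted_squares:
  fixes x y K :: real
  assumes "K > 0"
  shows "x * y \<le> x\<^sup>2 / K + K * y\<^sup>2 / 4"
proof -
  have "0 \<le> (x - K * y / 2)\<^sup>2 / K" using assms by simp
  also have "\<dots> = x\<^sup>2 / K + K * y\<^sup>2 / 4 - x * y"
    using assms by (simp add: power2_eq_square field_simps)
  finally show ?thesis by simp
qed

lemma inner_unit_split:
  fixes \<xi> q v :: "'a::real_inner"
  assumes "norm \<xi> = 1"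
  shows "q \<bullet> v = (\<xi> \<bullet> q) * (\<xi> \<bullet> v) + (q - (\<xi> \<bullet> q) *\<^sub>R \<xi>) \<bullet> (v - (\<xi> \<bullet> v) *\<^sub>R \<xi>)"
proof -
  have "\<xi> \<bullet> \<xi> = 1" using assms by (simp add: norm_eq_sqrt_inner)
  then show ?thesis by (simp add: inner_diff_left inner_diff_right inner_commute algebra_simps)
qed

lemma vee_form_le_if_contact_ineq:
  fixes \<xi> q v :: "'a::real_inner"
  assumes "norm \<xi> = 1" "K > 0" "\<xi> \<bullet> q \<le> - ((norm (q - (\<xi> \<bullet> q) *\<^sub>R \<xi>))\<^sup>2 / K) + K"
  shows "(\<xi> \<bullet> v) * (q \<bullet> v) \<le> K * (norm v)\<^sup>2"
proof -
  define a \<alpha> where "a = \<xi> \<bullet> q" and "\<alpha> = \<xi> \<bullet> v"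
  define w p where "w = q - a *\<^sub>R \<xi>" and "p = v - \<alpha> *\<^sub>R \<xi>"
  have qv: "q \<bullet> v = a * \<alpha> + w \<bullet> p"
    unfolding a_def \<alpha>_def w_def p_def by (rule inner_unit_split[OF assms(1)])
  have vv: "(norm v)\<^sup>2 = \<alpha>\<^sup>2 + (norm p)\<^sup>2"
    unfolding power2_norm_eq_inner \<alpha>_def p_def
    using inner_unit_split[OF assms(1), of v v] by (simp add: power2_eq_square)
  have "\<alpha> * (w \<bullet> p) \<le> \<bar>\<alpha>\<bar> * \<bar>w \<bullet> p\<bar>"
    by (metis abs_ge_self abs_mult)
  also have "\<dots> \<le> (\<bar>\<alpha>\<bar> * norm w) * norm p"
    unfolding mult.assoc by (intro mult_left_mono Cauchy_Schwarz_ineq2) simp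
  \<comment> \<open>weights chosen so that the first term cancels against the hypothesis on a\<close>
  also have "\<dots> \<le> \<alpha>\<^sup>2 * (norm w)\<^sup>2 / K + K * (norm p)\<^sup>2 / 4"
    using mult_le_weighted_squares[OF assms(2), of "\<bar>\<alpha>\<bar> * norm w" "norm p"]
    by (simp add: power_mult_distrib)
  finally have "\<alpha> * (w \<bullet> p) \<le> \<alpha>\<^sup>2 * (norm w)\<^sup>2 / K + K * (norm p)\<^sup>2 / 4" .
  moreover have "\<alpha>\<^sup>2 * a \<le> \<alpha>\<^sup>2 * (K - (norm w)\<^sup>2 / K)"
    using assms(3) by (intro mult_left_mono) (auto simp: a_def w_def)
  moreover have "\<alpha> * (q \<bullet> v) = \<alpha>\<^sup>2 * a + \<alpha> * (w \<bullet> p)"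
    by (simp add: qv power2_eq_square algebra_simps)
  moreover have "\<alpha>\<^sup>2 * (K - (norm w)\<^sup>2 / K) = K * \<alpha>\<^sup>2 - \<alpha>\<^sup>2 * (norm w)\<^sup>2 / K"
    by (simp add: algebra_simps)
  moreover have "K * (norm v)\<^sup>2 = K * \<alpha>\<^sup>2 + K * (norm p)\<^sup>2"
    by (simp add: vv distrib_left)
  moreover have "K * (norm p)\<^sup>2 / 4 \<le> K * (norm p)\<^sup>2" using assms(2) by simp
  ultimately show ?thesis unfolding \<alpha>_def by linarith
qed

lemma contact_ineq_if_vee_form_le:
  fixes \<xi> q :: "'a::real_inner"
  assumes "norm \<xi> = 1" "K > 0" "0 \<le> e" "4 * e \<le> K"
    and vee: "\<And>v. (\<xi> \<bullet> v) * (q \<bullet> v) \<le> e * (norm v)\<^sup>2"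
  shows "\<xi> \<bullet> q \<le> - ((norm (q - (\<xi> \<bullet> q) *\<^sub>R \<xi>))\<^sup>2 / K) + K"
proof -
  define w where "w = q - (\<xi> \<bullet> q) *\<^sub>R \<xi>"
  define W where "W = (norm w)\<^sup>2"
  have ww: "w \<bullet> w = W" by (simp add: W_def power2_norm_eq_inner)
  have "\<xi> \<bullet> \<xi> = 1" using assms by (simp add: norm_eq_sqrt_inner)
  then have w\<xi>: "\<xi> \<bullet> w = 0" by (simp add: w_def inner_diff_right)
  define v where "v = \<xi> + (2 / K) *\<^sub>R w"
  have "\<xi> \<bullet> v = 1"
    using \<open>\<xi> \<bullet> \<xi> = 1\<close> w\<xi> by (simp add: v_def inner_add_right)
  moreover have "q \<bullet> v = \<xi> \<bullet> q + 2 * W / K"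
  proof -
    have "q \<bullet> v = (w + (\<xi> \<bullet> q) *\<^sub>R \<xi>) \<bullet> v" by (simp add: w_def)
    then show ?thesis using \<open>\<xi> \<bullet> \<xi> = 1\<close> w\<xi> ww
      by (simp add: v_def inner_add_left inner_add_right inner_commute)
  qed
  moreover have "(norm v)\<^sup>2 = 1 + 4 * W / K\<^sup>2"
    unfolding power2_norm_eq_inner using \<open>\<xi> \<bullet> \<xi> = 1\<close> w\<xi> ww
    by (simp add: v_def inner_add_left inner_add_right inner_commute power2_eq_square)
  ultimately have "\<xi> \<bullet> q + 2 * W / K \<le> e * (1 + 4 * W / K\<^sup>2)" using vee[of v] by simp
  moreover have "e * (4 * W / K\<^sup>2) \<le> W / K"
  proof -
    have "e * (4 * W / K\<^sup>2) = (4 * e) * W / K / K" by (simp add: power2_eq_square)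
    also have "\<dots> \<le> K * W / K / K"
      using assms by (intro divide_right_mono mult_right_mono) (auto simp: W_def)
    finally show ?thesis using assms by simp
  qed
  moreover have "e * (1 + 4 * W / K\<^sup>2) = e + e * (4 * W / K\<^sup>2)" "2 * W / K = 2 * (W / K)"
    by (simp_all add: algebra_simps)
  ultimately have "\<xi> \<bullet> q \<le> e - W / K" by linarith
  then show ?thesis using assms by (simp add: W_def w_def)
qed

lemma inner_sym_vee_mult_vec: "v \<bullet> (sym_vee a b *v v) = (a \<bullet> v) * (b \<bullet> v)"
proof -
  have "v \<bullet> (sym_vee a b *v v) = (\<Sum>i\<in>UNIV. \<Sum>j\<in>UNIV. v$i * ((a$i * b$j + b$i * a$j) / 2) * v$j)"
    by (simp add: sym_vee_def matrix_vector_mult_def inner_vec_def sum_distrib_left mult.assoc)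
  also have "\<dots> = ((\<Sum>i\<in>UNIV. \<Sum>j\<in>UNIV. (a$i * v$i) * (b$j * v$j))
                   + (\<Sum>i\<in>UNIV. \<Sum>j\<in>UNIV. (b$i * v$i) * (a$j * v$j))) / 2"
    by (simp add: sum_divide_distrib sum.distrib[symmetric] algebra_simps add_divide_distrib)
  also have "(\<Sum>i\<in>UNIV. \<Sum>j\<in>UNIV. (b$i * v$i) * (a$j * v$j))
      = (\<Sum>i\<in>UNIV. \<Sum>j\<in>UNIV. (a$i * v$i) * (b$j * v$j))"
    by (subst sum.swap) (simp add: mult.commute)
  also have "(\<Sum>i\<in>UNIV. \<Sum>j\<in>UNIV. (a$i * v$i) * (b$j * v$j)) = (a \<bullet> v) * (b \<bullet> v)"
    by (simp add: inner_vec_def sum_product)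
  finally show ?thesis by simp
qed

lemma qf_le_sym_vee_iff: "qf_le (sym_vee a b) M \<longleftrightarrow> (\<forall>v. (a \<bullet> v) * (b \<bullet> v) \<le> v \<bullet> (M *v v))"
  by (simp add: qf_le_def inner_sym_vee_mult_vec)

lemma perp_mat_mult_vec: "perp_mat \<xi> *v q = q - (\<xi> \<bullet> q) *\<^sub>R \<xi>"
proof -
  have "(\<chi> i j. \<xi>$i * \<xi>$j) *v q = (\<xi> \<bullet> q) *\<^sub>R \<xi>"
    by (simp add: vec_eq_iff matrix_vector_mult_def inner_vec_def sum_distrib_left mult_ac)
  then show ?thesis by (simp add: perp_mat_def matrix_vector_mult_diff_rdistrib)
qed

lemma inner_mult_vec_le_entry_sum:
  fixes M :: "real^'n^'n"
  shows "v \<bullet> (M *v v) \<le> (\<Sum>i\<in>UNIV. \<Sum>j\<in>UNIV. \<bar>M $ i $ j\<bar>) * (norm v)\<^sup>2"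
proof -
  have "v \<bullet> (M *v v) \<le> norm v * norm (M *v v)"
    using Cauchy_Schwarz_ineq2[of v "M *v v"] by linarith
  also have "norm (M *v v) \<le> onorm ((*v) M) * norm v"
    by (rule onorm) simp
  also have "onorm ((*v) M) \<le> (\<Sum>i\<in>UNIV. \<Sum>j\<in>UNIV. \<bar>M $ i $ j\<bar>)"
    by (rule onorm_le_matrix_component_sum)
  finally show ?thesis
    by (simp add: power2_eq_square mult_left_mono mult_right_mono mult.assoc mult.left_commute)
qed

lemma inner_scaleR_mat_1_mult_vec:
  fixes v :: "real^'n"
  shows "v \<bullet> ((c *\<^sub>R mat 1) *v v) = c * (norm v)\<^sup>2"
  by (simp flip: scaleR_matrix_vector_assoc add: power2_norm_eq_inner)

lemma contact_ineq_if_qf_le_sym_vee: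
  fixes q :: "real^'N" and M :: "real^'N^'N"
  assumes "norm \<xi> = 1" and "K > 0" and "c \<ge> 0"
    and "4 * c * (\<Sum>i\<in>UNIV. \<Sum>j\<in>UNIV. \<bar>M $ i $ j\<bar>) \<le> K"
    and "qf_le (sym_vee \<xi> q) (c *\<^sub>R M)"
  shows "\<xi> \<bullet> q \<le> - ((norm (perp_mat \<xi> *v q))\<^sup>2 / K) + K"
proof -
  have "(\<xi> \<bullet> v) * (q \<bullet> v) \<le> (c * (\<Sum>i\<in>UNIV. \<Sum>j\<in>UNIV. \<bar>M $ i $ j\<bar>)) * (norm v)\<^sup>2" for v
  proof -
    have "(\<xi> \<bullet> v) * (q \<bullet> v) \<le> c * (v \<bullet> (M *v v))"
      using assms(5) by (simp add: qf_le_sym_vee_iff flip: scaleR_matrix_vector_assoc)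
    also have "\<dots> \<le> c * ((\<Sum>i\<in>UNIV. \<Sum>j\<in>UNIV. \<bar>M $ i $ j\<bar>) * (norm v)\<^sup>2)"
      using assms(3) by (intro mult_left_mono inner_mult_vec_le_entry_sum)
    finally show ?thesis by (simp add: mult.assoc)
  qed
  from contact_ineq_if_vee_form_le[OF assms(1,2) _ _ this] assms(3,4) show ?thesis
    by (simp add: perp_mat_mult_vec sum_nonneg mult.assoc)
qed

lemma qf_le_sym_vee_if_contact_ineq:
  fixes q :: "real^'N"
  assumes "norm \<xi> = 1" and "K > 0" and "\<xi> \<bullet> q \<le> - ((norm (perp_mat \<xi> *v q))\<^sup>2 / K) + K"
  shows "qf_le (sym_vee \<xi> q) (K *\<^sub>R mat 1)"
  using vee_form_le_if_contact_ineq[OF assms(1,2)] assms(3)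
  by (simp add: qf_le_sym_vee_iff perp_mat_mult_vec inner_scaleR_mat_1_mult_vec)

section \<open>Smooth monotone moduli of continuity\<close>

lemma monotone_modulus_of_tendsto_0:
  fixes t :: "'a::real_normed_vector \<Rightarrow> real"
  assumes "(t \<longlongrightarrow> 0) (at 0)"
  obtains g where "mono_on {0<..} g" "\<And>r. r > 0 \<Longrightarrow> g r > 0" "(g \<longlongrightarrow> 0) (at_right 0)"
    "\<forall>\<^sub>F z in at 0. t z \<le> g (norm z)"
proof -
  \<comment> \<open>capping at 1 keeps the suprema finite without assuming t bounded\<close>
  define S where "S r = insert 0 {min 1 \<bar>t z\<bar> | z. z \<noteq> 0 \<and> norm z \<le> r}" for r
  define m where "m r = Sup (S r)" for r
  have bdd: "bdd_above (S r)" for r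
    unfolding S_def by (rule bdd_aboveI[of _ 1]) auto
  have m_ge: "min 1 \<bar>t z\<bar> \<le> m (norm z)" if "z \<noteq> 0" for z
    unfolding m_def using that by (intro cSup_upper bdd) (auto simp: S_def)
  have m_nonneg: "0 \<le> m r" for r
    unfolding m_def by (intro cSup_upper bdd) (simp add: S_def)
  have m_mono: "mono m"
    unfolding m_def by (intro monoI cSup_subset_mono bdd) (auto simp: S_def)
  have "(m \<longlongrightarrow> 0) (at_right 0)"
  proof (rule tendstoI)
    fix e :: real assume "e > 0"
    then have "\<forall>\<^sub>F z in at 0. \<bar>t z\<bar> < e / 2"
      using tendstoD[OF assms, of "e / 2"] by simp
    then obtain d where "d > 0" and d: "\<And>z. z \<noteq> 0 \<Longrightarrow> norm z < d \<Longrightarrow> \<bar>t z\<bar> < e / 2"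
      unfolding eventually_at by auto
    have "min 1 \<bar>t z\<bar> \<le> e / 2" if "z \<noteq> 0" "norm z < d" for z
      using d[OF that] by linarith
    then have "m r \<le> e / 2" if "r < d" for r
      unfolding m_def using \<open>e > 0\<close> that by (intro cSup_least) (auto simp: S_def)
    then show "\<forall>\<^sub>F r in at_right 0. dist (m r) 0 < e"
      using \<open>d > 0\<close> \<open>e > 0\<close> m_nonneg
      by (intro eventually_at_rightI[of 0 d]) (force simp: dist_real_def)+
  qed
  show ?thesis
  proof
    show "mono_on {0<..} (\<lambda>r. m r + r)"
      using m_mono by (intro mono_onI add_mono) (auto dest: monoD)
    show "m r + r > 0" if "r > 0" for r using m_nonneg[of r] that by simp
    show "((\<lambda>r. m r + r) \<longlongrightarrow> 0) (at_right 0)"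
      using tendsto_add[OF \<open>(m \<longlongrightarrow> 0) (at_right 0)\<close> tendsto_ident_at] by simp
    have "\<forall>\<^sub>F z in at 0. \<bar>t z\<bar> < 1" "\<forall>\<^sub>F z in at (0::'a). z \<noteq> 0"
      using tendstoD[OF assms, of 1] by (auto simp: eventually_at_filter)
    then show "\<forall>\<^sub>F z in at 0. t z \<le> m (norm z) + norm z"
    proof eventually_elim
      case (elim z)
      then have "t z \<le> min 1 \<bar>t z\<bar>" by simp
      also have "\<dots> \<le> m (norm z)" using m_ge elim by blast
      finally show ?case using norm_ge_zero[of z] by linarith
    qed
  qed
qed

definition moving_average :: "(real \<Rightarrow> real) \<Rightarrow> real \<Rightarrow> real" where
  "moving_average h s = integral {s..s + 1} h"

lemma integrable_on_Icc_if_mono: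
  fixes h :: "real \<Rightarrow> real"
  assumes "mono h"
  shows "h integrable_on {a..b}"
  using assms by (intro integrable_on_mono_on) (simp add: mono_on_def monoD)

lemma moving_average_bounds:
  assumes "mono h"
  shows "h s \<le> moving_average h s" and "moving_average h s \<le> h (s + 1)"
proof -
  have "integral {s..s + 1} (\<lambda>_. h s) \<le> integral {s..s + 1} h"
    by (rule integral_le) (auto intro: integrable_on_Icc_if_mono assms monoD[OF assms])
  then show "h s \<le> moving_average h s" by (simp add: moving_average_def)
  have "integral {s..s + 1} h \<le> integral {s..s + 1} (\<lambda>_. h (s + 1))"
    by (rule integral_le) (auto intro: integrable_on_Icc_if_mono assms monoD[OF assms])
  then show "moving_average h s \<le> h (s + 1)" by (simp add: moving_average_def)
qed

lemma mono_moving_average: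
  assumes "mono h"
  shows "mono (moving_average h)"
proof
  fix s s' :: real assume "s \<le> s'"
  have "mono (h \<circ> (+) r)" for r
    using assms by (intro monoI) (simp add: monoD)
  then have "integral {0..1} (h \<circ> (+) s) \<le> integral {0..1} (h \<circ> (+) s')"
    using \<open>s \<le> s'\<close> by (intro integral_le integrable_on_Icc_if_mono) (simp_all add: monoD[OF assms])
  then show "moving_average h s \<le> moving_average h s'"
    by (simp add: moving_average_def integral_shift_Icc_real add.commute)
qed

lemma moving_average_thrice_bounds:
  assumes "mono h"
  defines "F \<equiv> moving_average (moving_average (moving_average h))"
  shows "h s \<le> F s" and "F s \<le> h (s + 3)"
proof -
  have mono: "mono (moving_average h)" "mono (moving_average (moving_average h))"
    using assms by (simp_all add: mono_moving_average)
  show "h s \<le> F s"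
    using moving_average_bounds(1)[OF assms(1), of s] moving_average_bounds(1)[OF mono(1), of s]
      moving_average_bounds(1)[OF mono(2), of s]
    unfolding F_def by linarith
  show "F s \<le> h (s + 3)"
    using moving_average_bounds(2)[OF assms(1), of "s + 2"]
      moving_average_bounds(2)[OF mono(1), of "s + 1"] moving_average_bounds(2)[OF mono(2), of s]
    unfolding F_def by (simp add: add.assoc)
qed

lemma moving_average_eq_indefinite_diff:
  assumes "\<And>a b. h integrable_on {a..b}" "a \<le> s"
  shows "moving_average h s = integral {a..s + 1} h - integral {a..s} h"
  using Henstock_Kurzweil_Integration.integral_combine[of a s "s + 1" h] assms
  by (simp add: moving_average_def)

lemma isCont_moving_average:
  assumes "\<And>a b. h integrable_on {a..b}"
  shows "isCont (moving_average h) s"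
proof -
  define \<Psi> where "\<Psi> u = integral {s - 1..u} h" for u
  have "continuous_on {s - 1..s + 2} \<Psi>"
    unfolding \<Psi>_def by (rule indefinite_integral_continuous_1[OF assms])
  then have "isCont \<Psi> u" if "u \<in> {s - 1<..<s + 2}" for u
    using that by (intro continuous_on_interior[of "{s - 1..s + 2}"]) auto
  then have "isCont (\<lambda>r. \<Psi> (r + 1)) s" "isCont \<Psi> s"
    using isCont_o2[where f = "\<lambda>r. r + 1" and a = s and g = \<Psi>] by auto
  then have "isCont (\<lambda>r. \<Psi> (r + 1) - \<Psi> r) s" by (rule isCont_diff)
  moreover have "\<forall>\<^sub>F r in nhds s. r \<in> {s - 1<..}"
    by (rule eventually_nhds_in_open) auto
  then have "\<forall>\<^sub>F r in nhds s. moving_average h r = \<Psi> (r + 1) - \<Psi> r"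
    by eventually_elim (simp add: \<Psi>_def moving_average_eq_indefinite_diff[OF assms])
  ultimately show ?thesis by (simp add: isCont_cong)
qed

lemma moving_average_has_real_derivative:
  assumes "continuous_on UNIV h"
  shows "(moving_average h has_real_derivative h (s + 1) - h s) (at s)"
proof -
  define \<Psi> where "\<Psi> u = integral {s - 1..u} h" for u
  have "(\<Psi> has_real_derivative h u) (at u)" if "u \<in> {s - 1<..<s + 2}" for u
  proof -
    have "(\<Psi> has_real_derivative h u) (at u within {s - 1..s + 2})"
      unfolding \<Psi>_def using that
      by (intro integral_has_real_derivative continuous_on_subset[OF assms]) auto
    then show ?thesis using that by (simp add: at_within_Icc_at)
  qed
  then have "(\<Psi> has_real_derivative h (s + 1)) (at (s + 1))" "(\<Psi> has_real_derivative h s) (at s)"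
    by auto
  then have "((\<lambda>r. \<Psi> (r + 1) - \<Psi> r) has_real_derivative h (s + 1) - h s) (at s)"
    by (intro DERIV_diff) (simp_all add: DERIV_shift)
  then show ?thesis
  proof (rule has_field_derivative_transform_within_open[of _ _ _ "{s - 1<..}"])
    fix r :: real assume "r \<in> {s - 1<..}"
    then show "\<Psi> (r + 1) - \<Psi> r = moving_average h r"
      using integrable_continuous_real[OF continuous_on_subset[OF assms]]
      by (subst moving_average_eq_indefinite_diff[where a = "s - 1"]) (auto simp: \<Psi>_def)
  qed auto
qed

definition C2_differentiable_on :: "(real \<Rightarrow> real) \<Rightarrow> real set \<Rightarrow> bool"
    (infix "C2'_differentiable'_on" 50) where
  "f C2_differentiable_on S \<longleftrightarrow>
    (\<exists>f' f''. (\<forall>t\<in>S. (f has_real_derivative f' t) (at t) \<and> (f' has_real_derivative f'' t) (at t))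
      \<and> continuous_on S f'')"

lemma C2_differentiable_onI:
  assumes "\<And>t. t \<in> S \<Longrightarrow> (f has_real_derivative f' t) (at t)"
    and "\<And>t. t \<in> S \<Longrightarrow> (f' has_real_derivative f'' t) (at t)"
    and "continuous_on S f''"
  shows "f C2_differentiable_on S"
  unfolding C2_differentiable_on_def using assms by (intro exI[of _ f'] exI[of _ f'']) simp

lemma C2_differentiable_onE:
  assumes "f C2_differentiable_on S"
  obtains f' f'' where "\<And>t. t \<in> S \<Longrightarrow> (f has_real_derivative f' t) (at t)"
    and "\<And>t. t \<in> S \<Longrightarrow> (f' has_real_derivative f'' t) (at t)"
    and "continuous_on S f''"
  using assms unfolding C2_differentiable_on_def by metis

lemma continuous_on_if_C2_differentiable_on:
  assumes "f C2_differentiable_on S"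
  shows "continuous_on S f"
  using assms by (elim C2_differentiable_onE)
    (intro continuous_at_imp_continuous_on ballI DERIV_isCont, blast)

lemma C2_differentiable_on_moving_average_twice:
  assumes "continuous_on UNIV h"
  shows "moving_average (moving_average h) C2_differentiable_on UNIV"
proof -
  have dh: "(moving_average h has_real_derivative h (s + 1) - h s) (at s)" for s
    by (rule moving_average_has_real_derivative[OF assms])
  then have "continuous_on UNIV (moving_average h)"
    by (intro continuous_at_imp_continuous_on ballI DERIV_isCont)
  then show ?thesis
  proof (rule C2_differentiable_onI[OF moving_average_has_real_derivative])
    fix s
    show "((\<lambda>s. moving_average h (s + 1) - moving_average h s) has_real_derivative
        (h (s + 2) - h (s + 1)) - (h (s + 1) - h s)) (at s)"
      using DERIV_diff[OF dh[of "s + 1", unfolded DERIV_shift] dh[of s]] by (simp add: add.assoc)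
  next
    show "continuous_on UNIV (\<lambda>s. (h (s + 2) - h (s + 1)) - (h (s + 1) - h s))"
      by (intro continuous_intros continuous_on_compose2[OF assms]) auto
  qed
qed

lemma C2_differentiable_on_compose_ln:
  assumes "F C2_differentiable_on UNIV"
  shows "(\<lambda>r. F (ln r)) C2_differentiable_on {0<..}"
proof -
  obtain F' F'' where dF: "\<And>s. (F has_real_derivative F' s) (at s)"
    and dF': "\<And>s. (F' has_real_derivative F'' s) (at s)" and cF'': "continuous_on UNIV F''"
    using assms by (rule C2_differentiable_onE) auto
  have cF': "continuous_on UNIV F'"
    using dF' by (intro continuous_at_imp_continuous_on ballI DERIV_isCont)
  have cln: "continuous_on {0<..} (ln :: real \<Rightarrow> real)"
    by (rule continuous_at_imp_continuous_on) (auto intro: isCont_ln)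
  show ?thesis
  proof (rule C2_differentiable_onI)
    fix r :: real assume "r \<in> {0<..}"
    then have r: "r > 0" by simp
    show "((\<lambda>r. F (ln r)) has_real_derivative F' (ln r) / r) (at r)"
      using DERIV_chain2[OF dF DERIV_ln[OF r]] by (simp add: divide_inverse)
    have "((\<lambda>r. F' (ln r) / r) has_real_derivative
            ((F'' (ln r) * inverse r) * r - F' (ln r) * 1) / (r * r)) (at r)"
      using r by (intro DERIV_divide DERIV_chain2[OF dF' DERIV_ln] DERIV_ident) auto
    moreover have "F'' (ln r) * inverse r * r = F'' (ln r)" using r by simp
    ultimately show "((\<lambda>r. F' (ln r) / r) has_real_derivative
        (F'' (ln r) - F' (ln r)) / r\<^sup>2) (at r)"
      by (simp add: power2_eq_square)
  next
    show "continuous_on {0<..} (\<lambda>r. (F'' (ln r) - F' (ln r)) / r\<^sup>2)"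
      using continuous_on_compose2[OF cF'' cln] continuous_on_compose2[OF cF' cln]
      by (intro continuous_on_divide continuous_on_diff continuous_on_power continuous_on_id) auto
  qed
qed

lemma smooth_monotone_majorant:
  fixes g :: "real \<Rightarrow> real"
  assumes "mono_on {0<..} g" and "(g \<longlongrightarrow> 0) (at_right 0)"
  obtains \<sigma> where "mono_on {0<..} \<sigma>" "\<sigma> C2_differentiable_on {0<..}" "(\<sigma> \<longlongrightarrow> 0) (at_right 0)"
    "\<And>r. r > 0 \<Longrightarrow> g r \<le> \<sigma> r"
proof -
  define f where "f = g \<circ> exp"
  define F where "F = moving_average (moving_average (moving_average f))"
  have "mono f"
    unfolding f_def by (intro monoI) (simp add: mono_onD[OF assms(1)])
  then have "mono F"
    unfolding F_def by (simp add: mono_moving_average)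
  have bounds: "f s \<le> F s" "F s \<le> f (s + 3)" for s
    unfolding F_def using \<open>mono f\<close> by (rule moving_average_thrice_bounds)+
  define \<sigma> where "\<sigma> r = F (ln r)" for r
  show ?thesis
  proof
    show "mono_on {0<..} \<sigma>"
      unfolding \<sigma>_def using \<open>mono F\<close> by (intro mono_onI) (simp add: monoD)
    have "continuous_on UNIV (moving_average f)"
      using \<open>mono f\<close> by (intro continuous_at_imp_continuous_on ballI isCont_moving_average
          integrable_on_Icc_if_mono)
    then show "\<sigma> C2_differentiable_on {0<..}"
      unfolding \<sigma>_def F_def
      by (intro C2_differentiable_on_compose_ln C2_differentiable_on_moving_average_twice)
    have below: "g r \<le> \<sigma> r" and above: "\<sigma> r \<le> g (exp 3 * r)" if "r > 0" for r
      using bounds[of "ln r"] that by (simp_all add: \<sigma>_def f_def exp_add mult.commute)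
    then show "g r \<le> \<sigma> r" if "r > 0" for r using that by blast
    have pos: "\<forall>\<^sub>F r in at_right (0::real). r > 0"
      by (rule eventually_at_right_less)
    have "filterlim (\<lambda>r. exp 3 * r) (at_right 0) (at_right (0::real))"
      by (rule filterlim_at_withinI) (auto intro!: tendsto_eq_intros eventually_at_rightI[of 0 1])
    then have lim: "((\<lambda>r. g (exp 3 * r)) \<longlongrightarrow> 0) (at_right 0)"
      by (rule filterlim_compose[OF assms(2)])
    have "\<forall>\<^sub>F r in at_right 0. g r \<le> \<sigma> r" "\<forall>\<^sub>F r in at_right 0. \<sigma> r \<le> g (exp 3 * r)"
      using pos by (auto elim: eventually_mono intro: below above)
    then show "(\<sigma> \<longlongrightarrow> 0) (at_right 0)"
      by (rule tendsto_sandwich[OF _ _ assms(2) lim])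
  qed
qed

section \<open>Second contact jets\<close>

lemma contact_jet2_iff_at_0:
  "(P, X) \<in> contact_jet2 u \<xi> x \<longleftrightarrow>
    (\<exists>T. continuous_on (UNIV - {0}) T \<and> (\<forall>y. y \<noteq> 0 \<longrightarrow> transpose (T y) = T y) \<and>
      (T \<longlongrightarrow> 0) (at 0) \<and>
      (\<forall>\<^sub>F z in at 0. qf_le (sym_vee \<xi> (u (z + x) - u x - P *v z - (1/2) *\<^sub>R tensor_quad X z))
        ((norm z)\<^sup>2 *\<^sub>R T z)))"
  by (simp add: contact_jet2_def at_to_0[of x] eventually_filtermap)

lemma contact_ineq_if_qf_le_vanishing:
  fixes Q :: "'a::real_normed_vector \<Rightarrow> real^'N" and T :: "'a \<Rightarrow> real^'N^'N"
  assumes "norm \<xi> = 1" and "(T \<longlongrightarrow> 0) (at 0)"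
    and "\<forall>\<^sub>F z in at 0. qf_le (sym_vee \<xi> (Q z)) ((norm z)\<^sup>2 *\<^sub>R T z)"
  obtains \<sigma> where "mono_on {0<..} \<sigma>" "\<forall>r>0. \<sigma> r > 0" "\<sigma> C2_differentiable_on {0<..}"
    "(\<sigma> \<longlongrightarrow> 0) (at_right 0)"
    "\<forall>\<^sub>F z in at 0. \<xi> \<bullet> Q z \<le> - ((norm (perp_mat \<xi> *v Q z))\<^sup>2 / (\<sigma> (norm z) * (norm z)\<^sup>2))
        + \<sigma> (norm z) * (norm z)\<^sup>2"
proof -
  define t where "t z = (\<Sum>i\<in>UNIV. \<Sum>j\<in>UNIV. \<bar>T z $ i $ j\<bar>)" for z
  have "(t \<longlongrightarrow> 0) (at 0)"
    unfolding t_def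
    by (intro tendsto_null_sum tendsto_rabs_zero tendsto_vec_nth[where a = 0, simplified]
        tendsto_vec_nth[where a = 0, simplified, OF assms(2)])
  then have "((\<lambda>z. 4 * t z) \<longlongrightarrow> 0) (at 0)"
    using tendsto_mult_right_zero by blast
  then obtain g where g: "mono_on {0<..} g" "\<And>r. r > 0 \<Longrightarrow> g r > 0" "(g \<longlongrightarrow> 0) (at_right 0)"
    and t_le_g: "\<forall>\<^sub>F z in at 0. 4 * t z \<le> g (norm z)"
    using monotone_modulus_of_tendsto_0 by blast
  obtain \<sigma> where \<sigma>: "mono_on {0<..} \<sigma>" "\<sigma> C2_differentiable_on {0<..}" "(\<sigma> \<longlongrightarrow> 0) (at_right 0)"
    and g_le_\<sigma>: "\<And>r. r > 0 \<Longrightarrow> g r \<le> \<sigma> r"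
    using smooth_monotone_majorant[OF g(1,3)] by blast
  have \<sigma>_pos: "\<sigma> r > 0" if "r > 0" for r
    using g(2)[OF that] g_le_\<sigma>[OF that] by linarith
  have "\<forall>\<^sub>F z in at (0::'a). z \<noteq> 0" by (simp add: eventually_at_filter)
  with assms(3) t_le_g
  have "\<forall>\<^sub>F z in at 0. \<xi> \<bullet> Q z \<le> - ((norm (perp_mat \<xi> *v Q z))\<^sup>2 / (\<sigma> (norm z) * (norm z)\<^sup>2))
        + \<sigma> (norm z) * (norm z)\<^sup>2"
  proof eventually_elim
    case (elim z)
    have "4 * (norm z)\<^sup>2 * t z \<le> \<sigma> (norm z) * (norm z)\<^sup>2"
      using elim(2) g_le_\<sigma>[of "norm z"] elim(3) by (simp add: mult_right_mono mult.commute)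
    then show ?case
      using \<sigma>_pos[of "norm z"] elim(1,3)
      by (intro contact_ineq_if_qf_le_sym_vee[OF assms(1)]) (simp_all add: t_def mult.assoc)
  qed
  with \<sigma> \<sigma>_pos that show ?thesis by blast
qed

lemma qf_le_vanishing_if_contact_ineq:
  fixes Q :: "'a::real_normed_vector \<Rightarrow> real^'N" and \<sigma> :: "real \<Rightarrow> real"
  assumes "norm \<xi> = 1" and "\<forall>r>0. \<sigma> r > 0" and "continuous_on {0<..} \<sigma>"
    and "(\<sigma> \<longlongrightarrow> 0) (at_right 0)"
    and "\<forall>\<^sub>F z in at 0. \<xi> \<bullet> Q z \<le> - ((norm (perp_mat \<xi> *v Q z))\<^sup>2 / (\<sigma> (norm z) * (norm z)\<^sup>2))
        + \<sigma> (norm z) * (norm z)\<^sup>2"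
  obtains T :: "'a \<Rightarrow> real^'N^'N" where "continuous_on (UNIV - {0}) T"
    "\<forall>y. y \<noteq> 0 \<longrightarrow> transpose (T y) = T y" "(T \<longlongrightarrow> 0) (at 0)"
    "\<forall>\<^sub>F z in at 0. qf_le (sym_vee \<xi> (Q z)) ((norm z)\<^sup>2 *\<^sub>R T z)"
proof
  define T where "T z = \<sigma> (norm z) *\<^sub>R (mat 1 :: real^'N^'N)" for z :: 'a
  show "continuous_on (UNIV - {0}) T"
    unfolding T_def
    by (intro continuous_on_scaleR continuous_on_const continuous_on_compose2[OF assms(3)]
        continuous_intros) auto
  show "\<forall>y. y \<noteq> 0 \<longrightarrow> transpose (T y) = T y"
    by (simp add: T_def transpose_def mat_def vec_eq_iff)
  have "filterlim norm (at_right 0) (at (0::'a))"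
    by (auto simp: filterlim_at eventually_at_filter intro: tendsto_norm_zero tendsto_ident_at)
  then have "((\<lambda>z. \<sigma> (norm z)) \<longlongrightarrow> 0) (at (0::'a))"
    by (rule filterlim_compose[OF assms(4)])
  then show "(T \<longlongrightarrow> 0) (at 0)"
    unfolding T_def using tendsto_scaleR[OF _ tendsto_const] by fastforce
  have "\<forall>\<^sub>F z in at (0::'a). z \<noteq> 0" by (simp add: eventually_at_filter)
  with assms(5) show "\<forall>\<^sub>F z in at 0. qf_le (sym_vee \<xi> (Q z)) ((norm z)\<^sup>2 *\<^sub>R T z)"
  proof eventually_elim
    case (elim z)
    have "\<sigma> (norm z) * (norm z)\<^sup>2 > 0" using assms(2) elim(2) by simp
    from qf_le_sym_vee_if_contact_ineq[OF assms(1) this elim(1)] show ?case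
      by (simp add: T_def mult.commute)
  qed
qed

theorem theorem27:
  fixes \<Omega> :: "(real^'n) set" and u :: "real^'n \<Rightarrow> real^'N"
    and x :: "real^'n" and \<xi> :: "real^'N"
    and P :: "real^'n^'N" and X :: "real^'n^'n^'N"
  assumes "open \<Omega>" and "continuous_on \<Omega> u" and "x \<in> \<Omega>"
    and "norm \<xi> = 1" and "sym_tensor X"
  shows "(P, X) \<in> contact_jet2 u \<xi> x \<longleftrightarrow>
    (\<exists>\<sigma> :: real \<Rightarrow> real.
       mono_on {0<..} \<sigma> \<and>
       (\<forall>t>0. \<sigma> t > 0) \<and>
       (\<exists>\<sigma>' \<sigma>''. (\<forall>t>0. (\<sigma> has_real_derivative \<sigma>' t) (at t)
                          \<and> (\<sigma>' has_real_derivative \<sigma>'' t) (at t))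
                 \<and> continuous_on {0<..} \<sigma>'') \<and>
       (\<sigma> \<longlongrightarrow> 0) (at_right 0) \<and>
       (\<forall>\<^sub>F z in at 0.
          (let Q = u (z + x) - u x - P *v z - (1/2) *\<^sub>R tensor_quad X z in
           \<xi> \<bullet> Q \<le> - ((norm (perp_mat \<xi> *v Q))\<^sup>2 / (\<sigma> (norm z) * (norm z)\<^sup>2))
                     + \<sigma> (norm z) * (norm z)\<^sup>2)))"
  (is "?L \<longleftrightarrow> ?R")
proof -
  define Q where "Q z = u (z + x) - u x - P *v z - (1/2) *\<^sub>R tensor_quad X z" for z
  have Q_fold: "u (z + x) - u x - P *v z - (1/2) *\<^sub>R tensor_quad X z = Q z" for z
    by (simp add: Q_def)
  have C2_iff: "\<sigma> C2_differentiable_on {0<..} \<longleftrightarrow>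
    (\<exists>\<sigma>' \<sigma>''. (\<forall>t>0. (\<sigma> has_real_derivative \<sigma>' t) (at t) \<and> (\<sigma>' has_real_derivative \<sigma>'' t) (at t))
      \<and> continuous_on {0<..} \<sigma>'')" for \<sigma>
    by (simp add: C2_differentiable_on_def Ball_def)
  show ?thesis
  proof
    assume ?L
    then obtain T :: "real^'n \<Rightarrow> real^'N^'N" where "(T \<longlongrightarrow> 0) (at 0)"
      and "\<forall>\<^sub>F z in at 0. qf_le (sym_vee \<xi> (Q z)) ((norm z)\<^sup>2 *\<^sub>R T z)"
      unfolding contact_jet2_iff_at_0 Q_fold by blast
    from contact_ineq_if_qf_le_vanishing[OF assms(4) this] show ?R
      unfolding Let_def Q_fold C2_iff[symmetric] by blast
  next
    assume ?R
    then obtain \<sigma> :: "real \<Rightarrow> real" where "\<forall>t>0. \<sigma> t > 0" "\<sigma> C2_differentiable_on {0<..}"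
      "(\<sigma> \<longlongrightarrow> 0) (at_right 0)"
      "\<forall>\<^sub>F z in at 0. \<xi> \<bullet> Q z \<le> - ((norm (perp_mat \<xi> *v Q z))\<^sup>2 / (\<sigma> (norm z) * (norm z)\<^sup>2))
        + \<sigma> (norm z) * (norm z)\<^sup>2"
      unfolding Let_def Q_fold C2_iff[symmetric] by blast
    moreover from this(2) have "continuous_on {0<..} \<sigma>"
      by (rule continuous_on_if_C2_differentiable_on)
    ultimately show ?L
      unfolding contact_jet2_iff_at_0 Q_fold using qf_le_vanishing_if_contact_ineq[OF assms(4)] by blast
  qed
qed

end
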